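(* For every cubic graph $G$, $\nu_2(G) \geq \frac{4}{5}\cdot |V(G)|$.
   Context: Graphs are finite, without loops, possibly with multiple edges; a graph is cubic if every vertex has degree $3$. For $k\geq 1$, $\nu_k(G)$ is the maximum number of edges of a $k$-edge-colorable subgraph of $G$. *)

theory Defs
  imports Complex_Main
begin

text \<open>A finite loopless multigraph: vertex set V, edge set E (edges are abstract
objects, so parallel edges are allowed), and an endpoint map assigning to every
edge a set of exactly two distinct vertices of V.\<close>

definition multigraph :: "'v set \<Rightarrow> 'e set \<Rightarrow> ('e \<Rightarrow> 'v set) \<Rightarrow> bool" where
  "multigraph V E ends \<longleftrightarrow> finite V \<and> finite E \<and>
     (\<forall>e\<in>E. ends e \<subseteq> V \<and> card (ends e) = 2)"

definition degree :: "'e set \<Rightarrow> ('e \<Rightarrow> 'v set) \<Rightarrow> 'v \<Rightarrow> nat" where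
  "degree E ends v = card {e\<in>E. v \<in> ends e}"

definition cubic :: "'v set \<Rightarrow> 'e set \<Rightarrow> ('e \<Rightarrow> 'v set) \<Rightarrow> bool" where
  "cubic V E ends \<longleftrightarrow> multigraph V E ends \<and> (\<forall>v\<in>V. degree E ends v = 3)"

definition k_edge_colorable :: "nat \<Rightarrow> 'e set \<Rightarrow> ('e \<Rightarrow> 'v set) \<Rightarrow> bool" where
  "k_edge_colorable k F ends \<longleftrightarrow>
     (\<exists>c :: 'e \<Rightarrow> nat. (\<forall>e\<in>F. c e < k) \<and>
        (\<forall>e\<in>F. \<forall>f\<in>F. e \<noteq> f \<and> ends e \<inter> ends f \<noteq> {} \<longrightarrow> c e \<noteq> c f))"

definition nu :: "nat \<Rightarrow> 'e set \<Rightarrow> ('e \<Rightarrow> 'v set) \<Rightarrow> nat" where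
  "nu k E ends = Max {card F | F. F \<subseteq> E \<and> k_edge_colorable k F ends}"

end

theory Submission
  imports Defs
begin

text \<open>
  Take a cut of maximum size. Moving a vertex to the other side cannot enlarge it, so every vertex
  keeps at least two of its three edges in the cut. Inside the cut choose a minimal spanning
  subgraph \<open>B\<close> of minimum degree two. No edge of \<open>B\<close> joins two vertices of degree three (it could
  be deleted), so the set \<open>T\<close> of these vertices satisfies \<open>3 |T| \<le> |B|\<close>; together with
  \<open>2 |B| = 2 |V| + |T|\<close> this gives \<open>5 |T| \<le> 2 |V|\<close>. A maximal subgraph \<open>F\<close> of \<open>B\<close> of maximum
  degree two misses at most \<open>|T|\<close> edges of \<open>B\<close>, hence \<open>|F| \<ge> |V| - |T| / 2 \<ge> 4 |V| / 5\<close>. Being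
  bipartite, \<open>F\<close> is a disjoint union of paths and even cycles and therefore 2-edge-colourable.
\<close>

section \<open>Degrees\<close>

lemma degree_mono:
  assumes "F \<subseteq> B" "finite B"
  shows "degree F ends v \<le> degree B ends v"
  unfolding degree_def using assms by (intro card_mono) auto

lemma degree_insert:
  assumes "finite F" "e \<notin> F"
  shows "degree (insert e F) ends v = degree F ends v + (if v \<in> ends e then 1 else 0)"
proof (cases "v \<in> ends e")
  case True
  then have "{f\<in>insert e F. v \<in> ends f} = insert e {f\<in>F. v \<in> ends f}" by auto
  then show ?thesis using True assms unfolding degree_def by simp
next
  case False
  then have "{f\<in>insert e F. v \<in> ends f} = {f\<in>F. v \<in> ends f}" by auto
  then show ?thesis using False unfolding degree_def by simp
qed

lemma degree_remove:
  assumes "finite F" "e \<in> F"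
  shows "degree F ends v = degree (F - {e}) ends v + (if v \<in> ends e then 1 else 0)"
  using degree_insert[of "F - {e}" e ends v] assms by (simp add: insert_absorb)

lemma degree_fun_upd:
  assumes "finite F" "e \<in> F"
  shows "degree F (ends(e := S)) v = degree (F - {e}) ends v + (if v \<in> S then 1 else 0)"
proof -
  have "degree (F - {e}) (ends(e := S)) v = degree (F - {e}) ends v"
    unfolding degree_def by (rule arg_cong[where f = card]) auto
  then show ?thesis
    using degree_insert[of "F - {e}" e "ends(e := S)" v] assms by (simp add: insert_absorb)
qed

lemma degree_Diff:
  assumes "F \<subseteq> B" "finite B"
  shows "degree (B - F) ends v = degree B ends v - degree F ends v"
proof -
  have "{e\<in>B. v \<in> ends e} = {e\<in>F. v \<in> ends e} \<union> {e\<in>B - F. v \<in> ends e}" using assms(1) by auto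
  moreover have "finite {e\<in>B. v \<in> ends e}" using assms(2) by simp
  ultimately show ?thesis unfolding degree_def
    by (simp add: card_Un_disjoint disjoint_iff)
qed

lemma degree_eq_2E:
  assumes "degree F ends x = 2" "g \<in> F" "x \<in> ends g"
  obtains g' where "g' \<in> F" "g' \<noteq> g" "{f\<in>F. x \<in> ends f} = {g, g'}"
proof -
  obtain a b where ab: "{f\<in>F. x \<in> ends f} = {a, b}" "a \<noteq> b"
    using assms(1) unfolding degree_def card_2_iff by blast
  then have "g = a \<or> g = b" using assms(2,3) by blast
  then show ?thesis
  proof
    assume "g = a"
    then show ?thesis using that[of b] ab by blast
  next
    assume "g = b"
    then have "{f\<in>F. x \<in> ends f} = {g, a}" using ab by auto
    then show ?thesis using that[of a] ab \<open>g = b\<close> by blast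
  qed
qed

lemma degree_eq_2_no_pendant:
  assumes "finite F" "\<forall>v. degree F ends v \<le> 2" "\<forall>x. degree F ends x \<noteq> 1" "g \<in> F" "x \<in> ends g"
  shows "degree F ends x = 2"
proof -
  have "0 < degree F ends x" unfolding degree_def using assms(1,4,5) by (auto simp: card_gt_0_iff)
  then show ?thesis using assms(2,3) by (metis One_nat_def le_SucE le_zero_eq not_gr0 numeral_2_eq_2)
qed

lemma degree_reroute_le:
  assumes "finite F" "e \<in> F" "e' \<in> F" "e \<noteq> e'" "u \<in> ends e" "z \<in> ends e'"
    and "\<forall>v. degree F ends v \<le> k"
  shows "degree (F - {e'}) (ends(e := {u, z})) y \<le> k"
proof -
  have "degree (F - {e'}) (ends(e := {u, z})) y =
      degree (F - {e'} - {e}) ends y + (if y \<in> {u, z} then 1 else 0)"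
    using assms(1-4) by (intro degree_fun_upd) auto
  moreover have "degree (F - {e'} - {e}) ends y \<le> degree (F - {e}) ends y"
    "degree (F - {e'} - {e}) ends y \<le> degree (F - {e'}) ends y"
    using assms(1) by (intro degree_mono; auto)+
  moreover have "degree F ends y = degree (F - {e}) ends y + (if y \<in> ends e then 1 else 0)"
    "degree F ends y = degree (F - {e'}) ends y + (if y \<in> ends e' then 1 else 0)"
    using assms(1-3) by (intro degree_remove; simp)+
  ultimately show ?thesis using assms(5,6) assms(7)[rule_format, of y]
    by (cases "y = u \<or> y = z") (auto split: if_splits)
qed

lemma sum_degree_eq_sum_card_Int:
  assumes "finite F" "finite S"
  shows "(\<Sum>v\<in>S. degree F ends v) = (\<Sum>e\<in>F. card (ends e \<inter> S))"
proof -
  have "(\<Sum>v\<in>S. degree F ends v) = (\<Sum>v\<in>S. \<Sum>e\<in>F. of_bool (v \<in> ends e))"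
    unfolding degree_def using assms(1) by (simp add: Int_def)
  also have "\<dots> = (\<Sum>e\<in>F. \<Sum>v\<in>S. of_bool (v \<in> ends e))"
    by (rule sum.swap)
  also have "\<dots> = (\<Sum>e\<in>F. card (ends e \<inter> S))"
    using assms(2) by (simp add: Int_commute)
  finally show ?thesis .
qed

lemma sum_degree_eq_twice_card:
  assumes "multigraph V E ends" "F \<subseteq> E"
  shows "(\<Sum>v\<in>V. degree F ends v) = 2 * card F"
proof -
  have "finite F" "finite V" using assms finite_subset unfolding multigraph_def by auto
  moreover have "card (ends e \<inter> V) = 2" if "e \<in> F" for e
    using assms that unfolding multigraph_def by (auto simp: Int_absorb2)
  ultimately show ?thesis by (simp add: sum_degree_eq_sum_card_Int)
qed

lemma sum_degree_two_or_three:
  assumes "multigraph V E ends" "F \<subseteq> E" "\<forall>v\<in>V. 2 \<le> degree F ends v \<and> degree F ends v \<le> 3"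
  shows "2 * card F = 2 * card V + card {v\<in>V. degree F ends v = 3}"
proof -
  have "finite V" using assms(1) unfolding multigraph_def by simp
  have "(\<Sum>v\<in>V. degree F ends v) = (\<Sum>v\<in>V. 2 + of_bool (degree F ends v = 3))"
    using assms(3) by (intro sum.cong) auto
  also have "\<dots> = 2 * card V + card {v\<in>V. degree F ends v = 3}"
    using \<open>finite V\<close> by (simp only: sum.distrib sum_constant sum_of_bool_eq) (simp add: Int_def)
  finally show ?thesis using sum_degree_eq_twice_card[OF assms(1,2)] by simp
qed

section \<open>Edge colourings\<close>

definition proper_edge_coloring :: "nat \<Rightarrow> 'e set \<Rightarrow> ('e \<Rightarrow> 'v set) \<Rightarrow> ('e \<Rightarrow> nat) \<Rightarrow> bool" where
  "proper_edge_coloring k F ends c \<longleftrightarrow>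
     (\<forall>e\<in>F. c e < k) \<and> (\<forall>e\<in>F. \<forall>f\<in>F. e \<noteq> f \<and> ends e \<inter> ends f \<noteq> {} \<longrightarrow> c e \<noteq> c f)"

lemma k_edge_colorable_iff: "k_edge_colorable k F ends \<longleftrightarrow> (\<exists>c. proper_edge_coloring k F ends c)"
  unfolding k_edge_colorable_def proper_edge_coloring_def ..

lemma k_edge_colorable_empty: "k_edge_colorable k {} ends"
  unfolding k_edge_colorable_def by simp

lemma proper_edge_coloring_insert:
  assumes "proper_edge_coloring k F ends c" "e \<notin> F" "j < k"
    and "\<forall>f\<in>F. ends f \<inter> ends e \<noteq> {} \<longrightarrow> c f \<noteq> j"
  shows "proper_edge_coloring k (insert e F) ends (c(e := j))"
  using assms unfolding proper_edge_coloring_def by (auto simp: Int_commute)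

lemma k_edge_colorable_insert:
  assumes "k_edge_colorable k F ends" "finite F" "e \<notin> F"
    and "card {f\<in>F. ends f \<inter> ends e \<noteq> {}} < k"
  shows "k_edge_colorable k (insert e F) ends"
proof -
  obtain c where c: "proper_edge_coloring k F ends c"
    using assms(1) k_edge_colorable_iff by blast
  let ?used = "c ` {f\<in>F. ends f \<inter> ends e \<noteq> {}}"
  have "card ?used < card {..<k}"
    using assms(4) card_image_le[of "{f\<in>F. ends f \<inter> ends e \<noteq> {}}" c] assms(2) by simp
  then have "\<not> {..<k} \<subseteq> ?used"
    using assms(2) by (auto dest: card_mono[rotated])
  then obtain j where "j < k" "j \<notin> ?used" by auto
  then have "proper_edge_coloring k (insert e F) ends (c(e := j))"
    by (intro proper_edge_coloring_insert[OF c assms(3)]) auto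
  then show ?thesis using k_edge_colorable_iff by blast
qed

lemma k_edge_colorable_pendant:
  assumes "k_edge_colorable k (F - {e}) ends" "finite F" "e \<in> F"
    and "{f\<in>F. x \<in> ends f} = {e}" "ends e = {x, y}" "degree F ends y \<le> k"
  shows "k_edge_colorable k F ends"
proof -
  have "{f\<in>F - {e}. ends f \<inter> ends e \<noteq> {}} = {f\<in>F - {e}. y \<in> ends f}"
    using assms(4,5) by auto
  moreover have "degree F ends y = degree (F - {e}) ends y + 1"
    using degree_remove[OF assms(2,3), of ends y] assms(5) by simp
  ultimately have "card {f\<in>F - {e}. ends f \<inter> ends e \<noteq> {}} < k"
    using assms(6) unfolding degree_def by simp
  then have "k_edge_colorable k (insert e (F - {e})) ends"
    using assms(1,2) by (intro k_edge_colorable_insert) auto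
  then show ?thesis using assms(3) by (simp add: insert_absorb)
qed

lemma k_edge_colorable_digon:
  assumes "k_edge_colorable k (F - {e1, e2}) ends" "finite F" "2 \<le> k"
    and "e1 \<in> F" "e2 \<in> F" "e1 \<noteq> e2" "ends e1 = {v, w}" "ends e2 = {v, w}"
    and "{f\<in>F. v \<in> ends f} = {e1, e2}" "{f\<in>F. w \<in> ends f} = {e1, e2}"
  shows "k_edge_colorable k F ends"
proof -
  have at_vw: "f = e1 \<or> f = e2" if "f \<in> F" "ends f \<inter> {v, w} \<noteq> {}" for f
    using that assms(9,10) by blast
  then have no_neighbour: "{f\<in>F - {e1, e2}. ends f \<inter> ends e1 \<noteq> {}} = {}"
    using assms(7) by blast
  have "card {f\<in>F - {e1, e2}. ends f \<inter> ends e1 \<noteq> {}} < k"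
    unfolding no_neighbour using assms(3) by simp
  then have "k_edge_colorable k (insert e1 (F - {e1, e2})) ends"
    using assms(1,2) by (intro k_edge_colorable_insert) auto
  moreover have "insert e1 (F - {e1, e2}) = F - {e2}" using assms(4,6) by auto
  ultimately have "k_edge_colorable k (F - {e2}) ends" by simp
  moreover have "{f\<in>F - {e2}. ends f \<inter> ends e2 \<noteq> {}} = {e1}"
    using at_vw assms(4,6,7,8) by auto
  then have "card {f\<in>F - {e2}. ends f \<inter> ends e2 \<noteq> {}} < k"
    using assms(3) by simp
  ultimately have "k_edge_colorable k (insert e2 (F - {e2})) ends"
    using assms(2) by (intro k_edge_colorable_insert) auto
  then show ?thesis using assms(5) by (simp add: insert_absorb)
qed

(* e1 and e3 keep the colour that e1 = uz had before subdividing; e2 gets another colour. *)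
lemma k_edge_colorable_subdivide:
  assumes "k_edge_colorable k F ends'" "2 \<le> k" "e1 \<in> F" "e2 \<notin> F" "e3 \<notin> F" "e2 \<noteq> e3"
    and "ends' e1 = {u, z}" "ends e1 = {u, v}" "ends e2 = {v, w}" "ends e3 = {w, z}"
    and "distinct [u, v, w, z]"
    and "\<forall>f\<in>F - {e1}. ends f = ends' f \<and> v \<notin> ends f \<and> w \<notin> ends f"
  shows "k_edge_colorable k (insert e2 (insert e3 F)) ends"
proof -
  obtain c where c: "proper_edge_coloring k F ends' c"
    using assms(1) k_edge_colorable_iff by blast
  have at_u: "u \<in> ends' h" if "h \<in> F" "h \<noteq> e1" "ends h \<inter> ends e1 \<noteq> {}" for h
    using that assms(8,12) by auto
  have "ends' f \<inter> ends' g \<noteq> {}" if "f \<in> F" "g \<in> F" "ends f \<inter> ends g \<noteq> {}" for f g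
  proof (cases "f = e1 \<or> g = e1")
    case True
    then show ?thesis using that at_u[of f] at_u[of g] assms(7) by (auto simp: Int_commute)
  next
    case False
    then show ?thesis using that assms(12) by simp
  qed
  then have "proper_edge_coloring k F ends c"
    using c unfolding proper_edge_coloring_def by blast
  moreover have "c f \<noteq> c e1" if "f \<in> F" "ends f \<inter> ends e3 \<noteq> {}" for f
  proof -
    have "f \<noteq> e1" using that assms(8,10,11) by auto
    then have "z \<in> ends' f" using that assms(10,12) by auto
    then show ?thesis using c \<open>f \<in> F\<close> \<open>f \<noteq> e1\<close> assms(3,7)
      unfolding proper_edge_coloring_def by blast
  qed
  moreover have "c e1 < k" using c assms(3) unfolding proper_edge_coloring_def by blast
  ultimately have c3: "proper_edge_coloring k (insert e3 F) ends (c(e3 := c e1))"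
    using assms(5) by (intro proper_edge_coloring_insert) auto
  define j where "j = (if c e1 = 0 then 1 else 0 :: nat)"
  have j: "j < k" "j \<noteq> c e1" using assms(2) unfolding j_def by auto
  have "(c(e3 := c e1)) f \<noteq> j" if "f \<in> insert e3 F" "ends f \<inter> ends e2 \<noteq> {}" for f
  proof -
    have "f = e1 \<or> f = e3" using that assms(9,12) by auto
    then show ?thesis using j assms(3,5) by auto
  qed
  moreover have "e2 \<notin> insert e3 F" using assms(4,6) by simp
  ultimately have "proper_edge_coloring k (insert e2 (insert e3 F)) ends (c(e3 := c e1, e2 := j))"
    using proper_edge_coloring_insert[OF c3 _ j(1)] by blast
  then show ?thesis using k_edge_colorable_iff by blast
qed

lemma k_edge_colorable_expand_path:
  assumes "k_edge_colorable k (F - {e2, e3}) (ends(e1 := {u, z}))" "2 \<le> k"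
    and "e1 \<in> F" "e2 \<in> F" "e3 \<in> F" "e1 \<noteq> e2" "e1 \<noteq> e3" "e2 \<noteq> e3"
    and "ends e1 = {u, v}" "ends e2 = {v, w}" "ends e3 = {w, z}" "distinct [u, v, w, z]"
    and "{f\<in>F. v \<in> ends f} = {e1, e2}" "{f\<in>F. w \<in> ends f} = {e2, e3}"
  shows "k_edge_colorable k F ends"
proof -
  have "\<forall>f\<in>F - {e2, e3} - {e1}. ends f = (ends(e1 := {u, z})) f \<and> v \<notin> ends f \<and> w \<notin> ends f"
  proof
    fix f assume "f \<in> F - {e2, e3} - {e1}"
    then have "f \<in> F" "f \<notin> {e1, e2, e3}" by auto
    moreover have "f \<in> {e1, e2}" if "v \<in> ends f" using assms(13) that \<open>f \<in> F\<close> by blast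
    moreover have "f \<in> {e2, e3}" if "w \<in> ends f" using assms(14) that \<open>f \<in> F\<close> by blast
    ultimately show "ends f = (ends(e1 := {u, z})) f \<and> v \<notin> ends f \<and> w \<notin> ends f" by auto
  qed
  moreover have "e1 \<in> F - {e2, e3}" "e2 \<notin> F - {e2, e3}" "e3 \<notin> F - {e2, e3}"
    using assms(3,6,7) by auto
  ultimately have "k_edge_colorable k (insert e2 (insert e3 (F - {e2, e3}))) ends"
    using k_edge_colorable_subdivide[OF assms(1,2) _ _ _ assms(8) _ assms(9-12)] by simp
  moreover have "insert e2 (insert e3 (F - {e2, e3})) = F" using assms(4,5) by auto
  ultimately show ?thesis by simp
qed

lemma card_le_nu:
  assumes "finite E" "F \<subseteq> E" "k_edge_colorable k F ends"
  shows "card F \<le> nu k E ends"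
proof -
  have "{card F | F. F \<subseteq> E \<and> k_edge_colorable k F ends} \<subseteq> card ` Pow E" by auto
  then have "finite {card F | F. F \<subseteq> E \<and> k_edge_colorable k F ends}"
    using assms(1) by (simp add: finite_subset)
  then show ?thesis unfolding nu_def by (rule Max_ge) (use assms(2,3) in blast)
qed

section \<open>Bipartite graphs of maximum degree two\<close>

(* F is bipartite with colour classes X and its complement. *)
definition crossing :: "'v set \<Rightarrow> 'e set \<Rightarrow> ('e \<Rightarrow> 'v set) \<Rightarrow> bool" where
  "crossing X F ends \<longleftrightarrow> (\<forall>e\<in>F. \<exists>x\<in>X. \<exists>y. y \<notin> X \<and> ends e = {x, y})"

lemma crossing_subset: "crossing X F ends \<Longrightarrow> F' \<subseteq> F \<Longrightarrow> crossing X F' ends"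
  unfolding crossing_def by blast

lemma crossing_reroute:
  assumes "crossing X F ends" "u \<notin> X" "z \<in> X"
  shows "crossing X F (ends(e := {u, z}))"
  unfolding crossing_def
proof
  fix f assume "f \<in> F"
  show "\<exists>x\<in>X. \<exists>y. y \<notin> X \<and> (ends(e := {u, z})) f = {x, y}"
  proof (cases "f = e")
    case True
    then have "(ends(e := {u, z})) f = {z, u}" by auto
    then show ?thesis using assms(2,3) by blast
  next
    case False
    then show ?thesis using assms(1) \<open>f \<in> F\<close> unfolding crossing_def by simp
  qed
qed

lemma crossing_edgeE:
  assumes "crossing X F ends" "e \<in> F" "x \<in> ends e"
  obtains y where "ends e = {x, y}" "x \<in> X \<longleftrightarrow> y \<notin> X"
proof -
  obtain a b where ab: "a \<in> X" "b \<notin> X" "ends e = {a, b}"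
    using assms(1,2) unfolding crossing_def by blast
  show ?thesis
  proof (cases "x = a")
    case True
    then show ?thesis using that[of b] ab by simp
  next
    case False
    then have "x = b" using assms(3) ab(3) by simp
    then show ?thesis using that[of a] ab by (simp add: insert_commute)
  qed
qed

lemma crossing_degree_2_pathE:
  assumes "crossing X F ends" "e2 \<in> F"
    and "\<And>g x. g \<in> F \<Longrightarrow> x \<in> ends g \<Longrightarrow> degree F ends x = 2"
  obtains e1 e3 u v w z where "e1 \<in> F" "e1 \<noteq> e2" "e3 \<in> F" "e3 \<noteq> e2"
    "ends e1 = {u, v}" "ends e2 = {v, w}" "ends e3 = {w, z}"
    "u \<notin> X" "v \<in> X" "w \<notin> X" "z \<in> X"
    "{f\<in>F. v \<in> ends f} = {e1, e2}" "{f\<in>F. w \<in> ends f} = {e2, e3}"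
    "e1 = e3 \<or> distinct [u, v, w, z]"
proof -
  obtain v w where e2: "v \<in> X" "w \<notin> X" "ends e2 = {v, w}"
    using assms(1,2) unfolding crossing_def by blast
  then have "v \<in> ends e2" "w \<in> ends e2" by auto
  obtain e1 where e1: "e1 \<in> F" "e1 \<noteq> e2" "{f\<in>F. v \<in> ends f} = {e2, e1}"
    by (rule degree_eq_2E[OF assms(3)[OF assms(2) \<open>v \<in> ends e2\<close>] assms(2) \<open>v \<in> ends e2\<close>])
  obtain e3 where e3: "e3 \<in> F" "e3 \<noteq> e2" "{f\<in>F. w \<in> ends f} = {e2, e3}"
    by (rule degree_eq_2E[OF assms(3)[OF assms(2) \<open>w \<in> ends e2\<close>] assms(2) \<open>w \<in> ends e2\<close>])
  have "v \<in> ends e1" "w \<in> ends e3" using e1(3) e3(3) by auto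
  obtain u where u: "ends e1 = {v, u}" "u \<notin> X"
    using crossing_edgeE[OF assms(1) e1(1) \<open>v \<in> ends e1\<close>] e2(1) by blast
  obtain z where z: "ends e3 = {w, z}" "z \<in> X"
    using crossing_edgeE[OF assms(1) e3(1) \<open>w \<in> ends e3\<close>] e2(2) by blast
  have "distinct [u, v, w, z]" if "e1 \<noteq> e3"
  proof -
    have "u \<noteq> w"
    proof
      assume "u = w"
      then have "e1 \<in> {f\<in>F. w \<in> ends f}" using e1(1) u(1) by simp
      then show False using e3(3) e1(2) that by simp
    qed
    moreover have "v \<noteq> z"
    proof
      assume "v = z"
      then have "e3 \<in> {f\<in>F. v \<in> ends f}" using e3(1) z(1) by simp
      then show False using e1(3) e3(2) that by simp
    qed
    ultimately show ?thesis using u(2) z(2) e2(1,2) by auto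
  qed
  then show ?thesis
    using that[of e1 e3 u v w z] e1 e2 e3 u z by (auto simp: insert_commute)
qed

(* Every edge e2 = vw lies on a path u v w z whose inner vertices have degree two. Either the
   neighbouring edges e1, e3 coincide and form a digon with e2, or the path contracts to the single
   edge uz: this removes two edges, and u and z lie on different sides of the bipartition. *)
lemma crossing_without_pendant_edge_colorable:
  assumes IH: "\<And>F' ends'. F' \<subset> F \<Longrightarrow> crossing X F' ends' \<Longrightarrow> \<forall>v. degree F' ends' v \<le> 2
      \<Longrightarrow> k_edge_colorable 2 F' ends'"
    and fin: "finite F" and crossing: "crossing X F ends" and deg: "\<forall>v. degree F ends v \<le> 2"
    and "e2 \<in> F" and no_pendant: "\<forall>x. degree F ends x \<noteq> 1"
  shows "k_edge_colorable 2 F ends"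
proof -
  obtain e1 e3 u v w z where e1: "e1 \<in> F" "e1 \<noteq> e2" and e3: "e3 \<in> F" "e3 \<noteq> e2"
    and ends: "ends e1 = {u, v}" "ends e2 = {v, w}" "ends e3 = {w, z}"
    and X: "u \<notin> X" "v \<in> X" "w \<notin> X" "z \<in> X"
    and at_v: "{f\<in>F. v \<in> ends f} = {e1, e2}" and at_w: "{f\<in>F. w \<in> ends f} = {e2, e3}"
    and distinct: "e1 = e3 \<or> distinct [u, v, w, z]"
    by (rule crossing_degree_2_pathE[OF crossing \<open>e2 \<in> F\<close>
          degree_eq_2_no_pendant[OF fin deg no_pendant]])
  show ?thesis
  proof (cases "e1 = e3")
    case True
    then have "ends e1 = {v, w}" using ends X by (auto simp: doubleton_eq_iff)
    have "degree (F - {e1, e2}) ends v \<le> 2" for v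
      using deg[rule_format, of v] degree_mono[OF Diff_subset fin, of "{e1, e2}" ends v] by linarith
    moreover have "F - {e1, e2} \<subset> F" using e1(1) by blast
    ultimately have "k_edge_colorable 2 (F - {e1, e2}) ends"
      using IH crossing_subset[OF crossing Diff_subset] by blast
    then show ?thesis
      by (rule k_edge_colorable_digon[OF _ fin order.refl e1(1) \<open>e2 \<in> F\<close> e1(2)
            \<open>ends e1 = {v, w}\<close> ends(2) at_v]) (use at_w True in \<open>simp add: insert_commute\<close>)
  next
    case False
    define F' where "F' = F - {e2, e3}"
    define ends' where "ends' = ends(e1 := {u, z})"
    have "degree F' ends' y \<le> 2" for y
    proof -
      have "degree F' ends' y \<le> degree (F - {e3}) ends' y"
        using fin unfolding F'_def by (intro degree_mono) auto
      also have "\<dots> \<le> 2"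
        using fin e1(1) e3(1) False ends(1,3) deg unfolding ends'_def
        by (intro degree_reroute_le) auto
      finally show ?thesis .
    qed
    moreover have "crossing X F' ends'"
      unfolding ends'_def by (rule crossing_reroute[OF crossing_subset[OF crossing] X(1,4)])
        (auto simp: F'_def)
    moreover have "F' \<subset> F" using F'_def \<open>e2 \<in> F\<close> by blast
    ultimately have "k_edge_colorable 2 F' ends'" using IH by blast
    moreover have "distinct [u, v, w, z]" using distinct False by simp
    ultimately show ?thesis unfolding F'_def ends'_def
      using k_edge_colorable_expand_path[OF _ order.refl e1(1) \<open>e2 \<in> F\<close> e3(1) e1(2) False
          e3(2)[symmetric] ends _ at_v at_w] by blast
  qed
qed

lemma crossing_max_degree_2_edge_colorable:
  assumes "finite F" "crossing X F ends" "\<forall>v. degree F ends v \<le> 2"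
  shows "k_edge_colorable 2 F ends"
  using assms
proof (induction "card F" arbitrary: F ends rule: less_induct)
  case less
  note fin = less.prems(1) and crossing = less.prems(2) and deg = less.prems(3)
  have IH: "k_edge_colorable 2 F' ends'"
    if "F' \<subset> F" "crossing X F' ends'" "\<forall>v. degree F' ends' v \<le> 2" for F' ends'
    using less.hyps[OF psubset_card_mono[OF fin that(1)]] that finite_subset[OF _ fin]
    by (meson psubset_imp_subset)
  consider "F = {}" | x where "degree F ends x = 1" | e where "e \<in> F" "\<forall>x. degree F ends x \<noteq> 1"
    by blast
  then show ?case
  proof cases
    case 1
    then show ?thesis by (simp add: k_edge_colorable_empty)
  next
    case (2 x)
    then obtain e where e: "{f\<in>F. x \<in> ends f} = {e}"
      unfolding degree_def by (rule card_1_singletonE)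
    then have "e \<in> F" "x \<in> ends e" by auto
    then obtain y where y: "ends e = {x, y}" by (rule crossing_edgeE[OF crossing])
    have "degree (F - {e}) ends v \<le> 2" for v
      using deg[rule_format, of v] degree_mono[OF Diff_subset fin, of "{e}" ends v] by linarith
    moreover have "F - {e} \<subset> F" using \<open>e \<in> F\<close> by blast
    ultimately have "k_edge_colorable 2 (F - {e}) ends"
      using IH crossing_subset[OF crossing Diff_subset] by blast
    then show ?thesis
      using k_edge_colorable_pendant[OF _ fin \<open>e \<in> F\<close> e y] deg by blast
  next
    case (3 e)
    then show ?thesis using crossing_without_pendant_edge_colorable[OF IH fin crossing deg] by blast
  qed
qed

section \<open>Cuts\<close>

definition cut_edges :: "'v set \<Rightarrow> 'e set \<Rightarrow> ('e \<Rightarrow> 'v set) \<Rightarrow> 'e set" where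
  "cut_edges X E ends = {e\<in>E. card (ends e \<inter> X) = 1}"

lemma card_doubleton_Int_eq_1_iff:
  assumes "a \<noteq> b"
  shows "card ({a, b} \<inter> Y) = 1 \<longleftrightarrow> (a \<in> Y \<longleftrightarrow> b \<notin> Y)"
  using assms by (cases "a \<in> Y"; cases "b \<in> Y") (auto simp: Int_insert_left)

lemma cut_edges_iff:
  assumes "e \<in> E" "ends e = {a, b}" "a \<noteq> b"
  shows "e \<in> cut_edges X E ends \<longleftrightarrow> (a \<in> X \<longleftrightarrow> b \<notin> X)"
  using assms card_doubleton_Int_eq_1_iff[OF assms(3)] unfolding cut_edges_def by simp

lemma crossing_cut_edges:
  assumes "multigraph V E ends" "F \<subseteq> cut_edges X E ends"
  shows "crossing X F ends"
  unfolding crossing_def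
proof
  fix e assume "e \<in> F"
  then have "e \<in> E" "e \<in> cut_edges X E ends" using assms(2) unfolding cut_edges_def by auto
  moreover obtain a b where ab: "ends e = {a, b}" "a \<noteq> b"
    using assms(1) \<open>e \<in> E\<close> unfolding multigraph_def by (meson card_2_iff)
  ultimately have "a \<in> X \<longleftrightarrow> b \<notin> X" using cut_edges_iff[where ends = ends] by blast
  show "\<exists>x\<in>X. \<exists>y. y \<notin> X \<and> ends e = {x, y}"
  proof (cases "a \<in> X")
    case True
    then show ?thesis using ab(1) \<open>a \<in> X \<longleftrightarrow> b \<notin> X\<close> by blast
  next
    case False
    then have "b \<in> X" "ends e = {b, a}" using ab(1) \<open>a \<in> X \<longleftrightarrow> b \<notin> X\<close> by (auto simp: insert_commute)
    then show ?thesis using False by blast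
  qed
qed

lemma cut_edges_flip:
  assumes "multigraph V E ends"
  shows "cut_edges (if v \<in> X then X - {v} else insert v X) E ends =
    (cut_edges X E ends - {e\<in>E. v \<in> ends e}) \<union> ({e\<in>E. v \<in> ends e} - cut_edges X E ends)"
proof -
  have flip: "e \<in> cut_edges (if v \<in> X then X - {v} else insert v X) E ends \<longleftrightarrow>
    (e \<in> cut_edges X E ends \<longleftrightarrow> v \<notin> ends e)" if eE: "e \<in> E" for e
  proof -
    obtain a b where ab: "ends e = {a, b}" "a \<noteq> b"
      using assms eE unfolding multigraph_def by (meson card_2_iff)
    show ?thesis unfolding cut_edges_iff[where ends = ends, OF eE ab] using ab
      by (cases "v \<in> X"; cases "a = v"; cases "b = v") auto
  qed
  show ?thesis
  proof (rule set_eqI)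
    fix e
    show "e \<in> cut_edges (if v \<in> X then X - {v} else insert v X) E ends \<longleftrightarrow>
      e \<in> (cut_edges X E ends - {e\<in>E. v \<in> ends e}) \<union> ({e\<in>E. v \<in> ends e} - cut_edges X E ends)"
    proof (cases "e \<in> E")
      case True
      then show ?thesis using flip by blast
    next
      case False
      then show ?thesis unfolding cut_edges_def by blast
    qed
  qed
qed

lemma card_cut_edges_flip:
  assumes "multigraph V E ends"
  shows "card (cut_edges (if v \<in> X then X - {v} else insert v X) E ends)
      + 2 * degree (cut_edges X E ends) ends v
    = card (cut_edges X E ends) + degree E ends v"
proof -
  define C where "C = cut_edges X E ends"
  define Ev where "Ev = {e\<in>E. v \<in> ends e}"
  have "finite E" using assms unfolding multigraph_def by simp
  then have "C \<subseteq> E" "finite C" "finite Ev" unfolding C_def Ev_def cut_edges_def by auto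
  have "card (C - Ev \<union> (Ev - C)) = card (C - Ev) + card (Ev - C)"
    using \<open>finite C\<close> \<open>finite Ev\<close> by (simp add: card_Un_disjoint Diff_Int_distrib2)
  moreover have "card C = card (C - Ev) + card (C \<inter> Ev)"
    using \<open>finite C\<close> card_Int_Diff[of C Ev] by simp
  moreover have "card Ev = card (Ev - C) + card (C \<inter> Ev)"
    using \<open>finite Ev\<close> card_Int_Diff[of Ev C] by (simp add: Int_commute)
  moreover have "degree C ends v = card (C \<inter> Ev)" "degree E ends v = card Ev"
    unfolding degree_def Ev_def using \<open>C \<subseteq> E\<close> by (auto intro: arg_cong[where f = card])
  ultimately show ?thesis
    unfolding cut_edges_flip[OF assms] C_def[symmetric] Ev_def[symmetric] by linarith
qed

lemma exists_cut_half_degree: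
  assumes "multigraph V E ends"
  obtains X where "\<forall>v\<in>V. degree E ends v \<le> 2 * degree (cut_edges X E ends) ends v"
proof -
  have "finite E" using assms unfolding multigraph_def by simp
  have "card (cut_edges Y E ends) < Suc (card E)" for Y
    using card_mono[OF \<open>finite E\<close>] unfolding cut_edges_def by (simp add: le_imp_less_Suc)
  then have "\<exists>X. X \<subseteq> V \<and> (\<forall>Y. Y \<subseteq> V \<longrightarrow> card (cut_edges Y E ends) \<le> card (cut_edges X E ends))"
    by (intro ex_has_greatest_nat[where k = "{}"]) auto
  then obtain X where "X \<subseteq> V"
    and X_max: "\<And>Y. Y \<subseteq> V \<Longrightarrow> card (cut_edges Y E ends) \<le> card (cut_edges X E ends)"
    by blast
  have "degree E ends v \<le> 2 * degree (cut_edges X E ends) ends v" if "v \<in> V" for v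
  proof -
    have "(if v \<in> X then X - {v} else insert v X) \<subseteq> V" using \<open>X \<subseteq> V\<close> that by auto
    then have "card (cut_edges (if v \<in> X then X - {v} else insert v X) E ends) \<le> card (cut_edges X E ends)"
      by (rule X_max)
    then show ?thesis using card_cut_edges_flip[OF assms, of v X] by linarith
  qed
  then show ?thesis using that by blast
qed

lemma cubic_exists_cut_min_degree_2:
  assumes "cubic V E ends"
  obtains X
  where "\<forall>v\<in>V. 2 \<le> degree (cut_edges X E ends) ends v \<and> degree (cut_edges X E ends) ends v \<le> 3"
proof -
  have G: "multigraph V E ends" and deg3: "\<forall>v\<in>V. degree E ends v = 3"
    using assms unfolding cubic_def by auto
  obtain X where half: "\<forall>v\<in>V. degree E ends v \<le> 2 * degree (cut_edges X E ends) ends v"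
    using exists_cut_half_degree[OF G] by blast
  have "cut_edges X E ends \<subseteq> E" "finite E" using G unfolding cut_edges_def multigraph_def by auto
  then have mono: "degree (cut_edges X E ends) ends v \<le> degree E ends v" for v by (rule degree_mono)
  have "\<forall>v\<in>V. 2 \<le> degree (cut_edges X E ends) ends v \<and> degree (cut_edges X E ends) ends v \<le> 3"
  proof
    fix v assume "v \<in> V"
    then have "degree E ends v \<le> 2 * degree (cut_edges X E ends) ends v" "degree E ends v = 3"
      using half deg3 by auto
    then show "2 \<le> degree (cut_edges X E ends) ends v \<and> degree (cut_edges X E ends) ends v \<le> 3"
      using mono[of v] by linarith
  qed
  then show ?thesis by (rule that)
qed

section \<open>Subgraphs of degree two and three\<close>

lemma exists_minimal_min_degree_2_subgraph:
  assumes "finite C" "\<forall>v\<in>V. 2 \<le> degree C ends v"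
  obtains B where "B \<subseteq> C" "\<forall>v\<in>V. 2 \<le> degree B ends v"
    "\<forall>e\<in>B. \<not> ends e \<subseteq> {v\<in>V. degree B ends v = 3}"
proof -
  define good where "good B \<longleftrightarrow> B \<subseteq> C \<and> (\<forall>v\<in>V. 2 \<le> degree B ends v)" for B
  have "{B. good B} \<subseteq> Pow C" unfolding good_def by auto
  then have "finite {B. good B}" using assms(1) by (simp add: finite_subset)
  moreover have "good C" using assms(2) unfolding good_def by simp
  ultimately obtain B where "good B" and B_min: "\<And>B'. good B' \<Longrightarrow> B' \<subseteq> B \<Longrightarrow> B = B'"
    using finite_has_minimal[of "{B. good B}"] by blast
  then have BC: "B \<subseteq> C" and B2: "\<forall>v\<in>V. 2 \<le> degree B ends v" unfolding good_def by auto
  have finB: "finite B" using assms(1) BC by (rule finite_subset[rotated])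
  have "\<not> ends e \<subseteq> {v\<in>V. degree B ends v = 3}" if "e \<in> B" for e
  proof
    assume e3: "ends e \<subseteq> {v\<in>V. degree B ends v = 3}"
    have "2 \<le> degree (B - {e}) ends v" if "v \<in> V" for v
    proof (cases "v \<in> ends e")
      case True
      then have "degree B ends v = 3" using e3 by blast
      then show ?thesis using degree_remove[OF finB \<open>e \<in> B\<close>, of ends v] True by simp
    next
      case False
      then show ?thesis using degree_remove[OF finB \<open>e \<in> B\<close>, of ends v] B2[rule_format, OF that] by simp
    qed
    then have "good (B - {e})" using BC unfolding good_def by auto
    then show False using B_min[of "B - {e}"] \<open>e \<in> B\<close> by blast
  qed
  then show ?thesis using that BC B2 by blast
qed

lemma card_degree_3_le:
  assumes "multigraph V E ends" "B \<subseteq> E" "\<forall>v\<in>V. 2 \<le> degree B ends v \<and> degree B ends v \<le> 3"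
    and "\<forall>e\<in>B. \<not> ends e \<subseteq> {v\<in>V. degree B ends v = 3}"
  shows "5 * card {v\<in>V. degree B ends v = 3} \<le> 2 * card V"
proof -
  define T where "T = {v\<in>V. degree B ends v = 3}"
  have finV: "finite V" and finB: "finite B"
    and ends: "\<And>e. e \<in> B \<Longrightarrow> ends e \<subseteq> V \<and> card (ends e) = 2"
    using assms(1,2) finite_subset unfolding multigraph_def by auto
  have "card (ends e \<inter> T) \<le> 1" if "e \<in> B" for e
  proof -
    have "finite (ends e)" "card (ends e) = 2" using ends[OF that] finV by (auto intro: finite_subset)
    moreover have "ends e \<inter> T \<subset> ends e" using assms(4) that unfolding T_def by blast
    ultimately have "card (ends e \<inter> T) < 2" using psubset_card_mono by metis
    then show ?thesis by simp
  qed
  then have "(\<Sum>e\<in>B. card (ends e \<inter> T)) \<le> (\<Sum>e\<in>B. 1)" by (intro sum_mono)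
  then have "(\<Sum>e\<in>B. card (ends e \<inter> T)) \<le> card B" by simp
  moreover have "(\<Sum>v\<in>T. degree B ends v) = 3 * card T" unfolding T_def by simp
  ultimately have "3 * card T \<le> card B"
    using sum_degree_eq_sum_card_Int[OF finB, of T ends] finV unfolding T_def by simp
  moreover have "2 * card B = 2 * card V + card T"
    unfolding T_def by (rule sum_degree_two_or_three[OF assms(1-3)])
  ultimately show ?thesis unfolding T_def by linarith
qed

lemma exists_sparse_min_degree_2_subgraph:
  assumes "multigraph V E ends" "C \<subseteq> E" "\<forall>v\<in>V. 2 \<le> degree C ends v \<and> degree C ends v \<le> 3"
  obtains B where "B \<subseteq> C" "\<forall>v\<in>V. 2 \<le> degree B ends v \<and> degree B ends v \<le> 3"
    "5 * card {v\<in>V. degree B ends v = 3} \<le> 2 * card V"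
proof -
  have "finite C" using assms(1,2) finite_subset unfolding multigraph_def by blast
  moreover have "\<forall>v\<in>V. 2 \<le> degree C ends v" using assms(3) by blast
  ultimately obtain B where BC: "B \<subseteq> C" and B2: "\<forall>v\<in>V. 2 \<le> degree B ends v"
    and independent: "\<forall>e\<in>B. \<not> ends e \<subseteq> {v\<in>V. degree B ends v = 3}"
    by (rule exists_minimal_min_degree_2_subgraph)
  have B23: "\<forall>v\<in>V. 2 \<le> degree B ends v \<and> degree B ends v \<le> 3"
  proof
    fix v assume "v \<in> V"
    have "degree B ends v \<le> degree C ends v" using BC \<open>finite C\<close> by (rule degree_mono)
    then show "2 \<le> degree B ends v \<and> degree B ends v \<le> 3" using B2 assms(3) \<open>v \<in> V\<close> by fastforce
  qed
  have "B \<subseteq> E" using BC assms(2) by (rule subset_trans)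
  then show ?thesis using that BC B23 card_degree_3_le[OF assms(1) _ B23 independent] by blast
qed

lemma exists_saturated_max_degree_2_subgraph:
  assumes "finite B"
  obtains F where "F \<subseteq> B" "\<forall>v. degree F ends v \<le> 2" "\<forall>e\<in>B - F. \<exists>x\<in>ends e. degree F ends x = 2"
proof -
  define ok where "ok F \<longleftrightarrow> F \<subseteq> B \<and> (\<forall>v. degree F ends v \<le> 2)" for F
  have "{F. ok F} \<subseteq> Pow B" unfolding ok_def by auto
  then have "finite {F. ok F}" using assms by (simp add: finite_subset)
  moreover have "ok {}" unfolding ok_def degree_def by simp
  ultimately obtain F where "ok F" and F_max: "\<And>F'. ok F' \<Longrightarrow> F \<subseteq> F' \<Longrightarrow> F = F'"
    using finite_has_maximal[of "{F. ok F}"] by blast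
  then have FB: "F \<subseteq> B" and F2: "\<forall>v. degree F ends v \<le> 2" unfolding ok_def by auto
  have finF: "finite F" using assms FB by (rule finite_subset[rotated])
  have "\<exists>x\<in>ends e. degree F ends x = 2" if e: "e \<in> B - F" for e
  proof (rule ccontr)
    assume "\<not> (\<exists>x\<in>ends e. degree F ends x = 2)"
    then have lt2: "degree F ends x < 2" if "x \<in> ends e" for x
      using that F2[rule_format, of x] by fastforce
    have "degree (insert e F) ends v \<le> 2" for v
    proof (cases "v \<in> ends e")
      case True
      then show ?thesis using degree_insert[OF finF, of e ends v] lt2[OF True] e by simp
    next
      case False
      then show ?thesis using degree_insert[OF finF, of e ends v] F2 e by simp
    qed
    then have "ok (insert e F)" using FB e unfolding ok_def by auto
    then show False using F_max[of "insert e F"] e by blast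
  qed
  then show ?thesis using that FB F2 by blast
qed

(* An edge of B - F is counted at an endpoint of F-degree two; that endpoint has B-degree three
   and meets exactly one edge of B - F. *)
lemma card_le_card_add_card_degree_3:
  assumes "multigraph V E ends" "B \<subseteq> E" "\<forall>v\<in>V. 2 \<le> degree B ends v \<and> degree B ends v \<le> 3"
    and "F \<subseteq> B" "\<forall>e\<in>B - F. \<exists>x\<in>ends e. degree F ends x = 2"
  shows "card B \<le> card F + card {v\<in>V. degree B ends v = 3}"
proof -
  have finV: "finite V" and finB: "finite B" and endsV: "\<And>e. e \<in> B \<Longrightarrow> ends e \<subseteq> V"
    using assms(1,2) finite_subset unfolding multigraph_def by auto
  define D where "D = {v\<in>V. degree F ends v = 2}"
  have "card (B - F) = (\<Sum>e\<in>B - F. 1)" by simp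
  also have "\<dots> \<le> (\<Sum>e\<in>B - F. card (ends e \<inter> D))"
  proof (rule sum_mono)
    fix e assume "e \<in> B - F"
    then have "ends e \<inter> D \<noteq> {}" using assms(5) endsV unfolding D_def by blast
    moreover have "finite (ends e \<inter> D)" using finV unfolding D_def by simp
    ultimately show "1 \<le> card (ends e \<inter> D)" by (simp add: Suc_le_eq card_gt_0_iff)
  qed
  also have "\<dots> = (\<Sum>v\<in>D. degree (B - F) ends v)"
    using finB finV unfolding D_def by (simp add: sum_degree_eq_sum_card_Int)
  also have "\<dots> = (\<Sum>v\<in>D. of_bool (degree B ends v = 3))"
  proof (rule sum.cong[OF refl])
    fix v assume "v \<in> D"
    then show "degree (B - F) ends v = of_bool (degree B ends v = 3)"
      using degree_Diff[OF assms(4) finB, of ends v] assms(3) unfolding D_def by auto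
  qed
  also have "\<dots> = card {v\<in>D. degree B ends v = 3}"
    using finV unfolding D_def by (simp add: Int_def)
  also have "\<dots> \<le> card {v\<in>V. degree B ends v = 3}"
    using finV unfolding D_def by (intro card_mono) auto
  finally have "card (B - F) \<le> card {v\<in>V. degree B ends v = 3}" .
  moreover have "card B = card F + card (B - F)"
    using card_Diff_subset[OF finite_subset[OF assms(4) finB] assms(4)] card_mono[OF finB assms(4)]
    by linarith
  ultimately show ?thesis by simp
qed

lemma exists_max_degree_2_subgraph:
  assumes "multigraph V E ends" "B \<subseteq> E" "\<forall>v\<in>V. 2 \<le> degree B ends v \<and> degree B ends v \<le> 3"
  obtains F where "F \<subseteq> B" "\<forall>v. degree F ends v \<le> 2"
    "card B \<le> card F + card {v\<in>V. degree B ends v = 3}"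
proof -
  have "finite B" using assms(1,2) finite_subset unfolding multigraph_def by blast
  then obtain F where "F \<subseteq> B" "\<forall>v. degree F ends v \<le> 2" "\<forall>e\<in>B - F. \<exists>x\<in>ends e. degree F ends x = 2"
    by (rule exists_saturated_max_degree_2_subgraph)
  then show ?thesis using that card_le_card_add_card_degree_3[OF assms] by blast
qed

theorem theorem2:
  fixes V :: "'v set" and E :: "'e set" and ends :: "'e \<Rightarrow> 'v set"
  assumes "cubic V E ends"
  shows "real (nu 2 E ends) \<ge> 4 / 5 * real (card V)"
proof -
  have G: "multigraph V E ends" and "finite E" using assms unfolding cubic_def multigraph_def by auto
  obtain X
    where cut: "\<forall>v\<in>V. 2 \<le> degree (cut_edges X E ends) ends v \<and> degree (cut_edges X E ends) ends v \<le> 3"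
    by (rule cubic_exists_cut_min_degree_2[OF assms])
  have CE: "cut_edges X E ends \<subseteq> E" unfolding cut_edges_def by auto
  obtain B where BC: "B \<subseteq> cut_edges X E ends"
    and B23: "\<forall>v\<in>V. 2 \<le> degree B ends v \<and> degree B ends v \<le> 3"
    and sparse: "5 * card {v\<in>V. degree B ends v = 3} \<le> 2 * card V"
    by (rule exists_sparse_min_degree_2_subgraph[OF G CE cut])
  have BE: "B \<subseteq> E" using BC CE by (rule subset_trans)
  obtain F where FB: "F \<subseteq> B" and F2: "\<forall>v. degree F ends v \<le> 2"
    and "card B \<le> card F + card {v\<in>V. degree B ends v = 3}"
    by (rule exists_max_degree_2_subgraph[OF G BE B23])
  moreover have "2 * card B = 2 * card V + card {v\<in>V. degree B ends v = 3}"
    by (rule sum_degree_two_or_three[OF G BE B23])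
  ultimately have large: "4 * card V \<le> 5 * card F" using sparse by linarith
  have "finite F" "F \<subseteq> E" "F \<subseteq> cut_edges X E ends"
    using FB BE BC finite_subset[OF _ \<open>finite E\<close>] by auto
  then have "k_edge_colorable 2 F ends"
    using crossing_max_degree_2_edge_colorable[OF _ crossing_cut_edges[OF G] F2] by blast
  then have "card F \<le> nu 2 E ends" by (rule card_le_nu[OF \<open>finite E\<close> \<open>F \<subseteq> E\<close>])
  with large show ?thesis by simp
qed

end
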